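(* Consider two CDNs, $CDN_1$ and $CDN_2$, with performance parameters $0\le \beta_1<\beta_2<1$, competing by prices in the model described in the context. Let $(w_1^*,w_2^* )$ be a Nash equilibrium in prices at which both CDNs attract a set of content providers of positive measure, and let $J_k^*=J_k(w_1^*,w_2^* )$ be the equilibrium revenues. Then $$J_1^*>4J_2^*.$$
   Context: Each $CDN_k$ ($k=1,2$) has a fixed performance parameter $\beta_k\in[0,1)$ (ratio of new to old user latency; smaller is better) and announces a price $w_k\ge 0$. There is a continuum of content providers of total mass $\Lambda>0$ whose sensitivity parameters $\theta$ are uniformly distributed on $[0,1]$. A content provider with sensitivity $\theta$ that hires $CDN_k$ obtains payoff $U(\theta,k)=\theta(1-\beta_k)-w_k$; hiring no CDN gives payoff $0$. Each content provider hires at most one CDN and chooses an option (a CDN or none) of maximum payoff (indifferent providers form a set of measure zero in the situations considered). $\Lambda_k(w_1,w_2)$ is $\Lambda$ times the measure of the set of $\theta\in[0,1]$ choosing $CDN_k$, and the revenue of $CDN_k$ is $J_k(w_1,w_2)=\Lambda_k(w_1,w_2)\,w_k$. A Nash equilibrium is a pair $(w_1^*,w_2^* )$ such that $J_1(w_1^*,w_2^* )\ge J_1(w_1,w_2^* )$ for all $w_1\ge0$ and $J_2(w_1^*,w_2^* )\ge J_2(w_1^*,w_2)$ for all $w_2\ge 0$. *)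

theory Defs
  imports "HOL-Analysis.Analysis"
begin

definition cp_payoff :: "real \<Rightarrow> real \<Rightarrow> real \<Rightarrow> real" where
  "cp_payoff beta w theta = theta * (1 - beta) - w"

text \<open>Set of sensitivities in [0,1] that strictly prefer the CDN (beta, w) to the
  other CDN (beta', w') and to hiring no CDN (payoff 0).\<close>
definition choosers :: "real \<Rightarrow> real \<Rightarrow> real \<Rightarrow> real \<Rightarrow> real set" where
  "choosers beta w beta' w' =
     {theta \<in> {0..1}. cp_payoff beta w theta > cp_payoff beta' w' theta \<and> cp_payoff beta w theta > 0}"

definition demand :: "real \<Rightarrow> real \<Rightarrow> real \<Rightarrow> real \<Rightarrow> real \<Rightarrow> real" where
  "demand Lam beta w beta' w' = Lam * measure lborel (choosers beta w beta' w')"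

definition Lam1 :: "real \<Rightarrow> real \<Rightarrow> real \<Rightarrow> real \<Rightarrow> real \<Rightarrow> real" where
  "Lam1 Lam b1 b2 w1 w2 = demand Lam b1 w1 b2 w2"

definition Lam2 :: "real \<Rightarrow> real \<Rightarrow> real \<Rightarrow> real \<Rightarrow> real \<Rightarrow> real" where
  "Lam2 Lam b1 b2 w1 w2 = demand Lam b2 w2 b1 w1"

definition J1 :: "real \<Rightarrow> real \<Rightarrow> real \<Rightarrow> real \<Rightarrow> real \<Rightarrow> real" where
  "J1 Lam b1 b2 w1 w2 = Lam1 Lam b1 b2 w1 w2 * w1"

definition J2 :: "real \<Rightarrow> real \<Rightarrow> real \<Rightarrow> real \<Rightarrow> real \<Rightarrow> real" where
  "J2 Lam b1 b2 w1 w2 = Lam2 Lam b1 b2 w1 w2 * w2"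

definition nash_eq :: "real \<Rightarrow> real \<Rightarrow> real \<Rightarrow> real \<Rightarrow> real \<Rightarrow> bool" where
  "nash_eq Lam b1 b2 w1 w2 \<longleftrightarrow> w1 \<ge> 0 \<and> w2 \<ge> 0 \<and>
     (\<forall>w. w \<ge> 0 \<longrightarrow> J1 Lam b1 b2 w1 w2 \<ge> J1 Lam b1 b2 w w2) \<and>
     (\<forall>w. w \<ge> 0 \<longrightarrow> J2 Lam b1 b2 w1 w2 \<ge> J2 Lam b1 b2 w1 w)"

end

theory Submission imports Defs begin

text \<open>Since both CDNs serve customers, the market splits at two thresholds:
  sensitivities above (w1 - w2)/(b2 - b1) buy from CDN1 and those between w2/(1 - b2)
  and that threshold buy from CDN2. Near the equilibrium both revenues are therefore
  concave parabolas in the own price, so each equilibrium price is the vertex of its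
  parabola: 2 w1 = (b2 - b1) + w2 and 2 w2 (1 - b1) = w1 (1 - b2). Substituting these
  first order conditions gives J1 = ((1 - b1)/(1 - b2)) 4 J2.\<close>

lemma measure_choosers_lower_beta:
  fixes beta beta' w w' :: real
  assumes "beta < beta'" "beta < 1"
    and "w' \<le> w" "w \<le> w' + (beta' - beta)" "w' * (1 - beta) \<le> w * (1 - beta')"
  shows "measure lborel (choosers beta w beta' w') = 1 - (w - w') / (beta' - beta)"
proof -
  define c where "c = (w - w') / (beta' - beta)"
  have c_bounds: "0 \<le> c" "c \<le> 1" and "w \<le> c * (1 - beta)"
    using assms by (auto simp: c_def field_simps)
  have "choosers beta w beta' w' = {c<..1}"
  proof (rule set_eqI)
    fix x
    have "cp_payoff beta' w' x < cp_payoff beta w x \<longleftrightarrow> c < x"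
      using assms by (simp add: c_def cp_payoff_def field_simps)
    moreover have "0 < cp_payoff beta w x" if "c < x"
    proof -
      have "c * (1 - beta) < x * (1 - beta)"
        using that assms by (intro mult_strict_right_mono) auto
      then show ?thesis
        using \<open>w \<le> c * (1 - beta)\<close> by (simp add: cp_payoff_def)
    qed
    ultimately show "x \<in> choosers beta w beta' w' \<longleftrightarrow> x \<in> {c<..1}"
      using c_bounds by (auto simp: choosers_def)
  qed
  then show ?thesis
    using c_bounds by (simp add: c_def)
qed

lemma measure_choosers_higher_beta:
  fixes beta beta' w w' :: real
  assumes "beta' < beta" "beta < 1"
    and "0 \<le> w" "w * (1 - beta') \<le> w' * (1 - beta)" "w' - w \<le> beta - beta'"
  shows "measure lborel (choosers beta w beta' w') = (w' - w) / (beta - beta') - w / (1 - beta)"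
proof -
  define l where "l = w / (1 - beta)"
  define u where "u = (w' - w) / (beta - beta')"
  have bounds: "0 \<le> l" "l \<le> u" "u \<le> 1"
    using assms by (auto simp: l_def u_def field_simps)
  have "choosers beta w beta' w' = {l<..<u}"
  proof (rule set_eqI)
    fix x
    have "cp_payoff beta' w' x < cp_payoff beta w x \<longleftrightarrow> x < u"
      using assms by (simp add: u_def cp_payoff_def field_simps)
    moreover have "0 < cp_payoff beta w x \<longleftrightarrow> l < x"
      using assms by (simp add: l_def cp_payoff_def field_simps)
    ultimately show "x \<in> choosers beta w beta' w' \<longleftrightarrow> x \<in> {l<..<u}"
      using bounds by (auto simp: choosers_def)
  qed
  then show ?thesis
    using bounds by (simp add: l_def u_def)
qed

text \<open>The hypothesis 0 < A rules out a maximiser at the boundary p = 0.\<close>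

lemma parabola_local_max_vertex:
  fixes K A a b p :: real
  assumes "0 < K" "0 < A" "0 \<le> p" "a < p" "p < b"
    and max: "\<And>w. 0 \<le> w \<Longrightarrow> a < w \<Longrightarrow> w < b \<Longrightarrow> K * w * (A - w) \<le> K * p * (A - p)"
  shows "A = 2 * p"
proof (rule ccontr)
  assume "A \<noteq> 2 * p"
  define t where "t = A - 2 * p"
  have "t \<noteq> 0" using \<open>A \<noteq> 2 * p\<close> by (simp add: t_def)
  have lim: "((\<lambda>s. p + s * t) \<longlongrightarrow> p) (at_right 0)"
    by (auto intro!: tendsto_eq_intros)
  have "\<forall>\<^sub>F s in at_right 0. 0 < s \<and> s < 1 \<and> a < p + s * t \<and> p + s * t < b \<and> 0 \<le> p + s * t"
  proof (intro eventually_conj)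
    show "\<forall>\<^sub>F s in at_right 0. s < (1::real)"
      using eventually_at_right_real[of 0 1] by (auto elim: eventually_mono)
    show "\<forall>\<^sub>F s in at_right 0. 0 \<le> p + s * t"
    proof (cases "0 < p")
      case True
      then show ?thesis
        using order_tendstoD(1)[OF lim, of 0] by (auto elim: eventually_mono)
    next
      case False
      then have "0 < t" using assms by (simp add: t_def)
      then show ?thesis using \<open>0 \<le> p\<close> eventually_at_right_less[of "0::real"]
        by (auto elim: eventually_mono)
    qed
    show "\<forall>\<^sub>F s in at_right 0. a < p + s * t"
      using order_tendstoD(1)[OF lim \<open>a < p\<close>] .
    show "\<forall>\<^sub>F s in at_right 0. p + s * t < b"
      using order_tendstoD(2)[OF lim \<open>p < b\<close>] .
  qed (rule eventually_at_right_less)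
  then obtain s where s: "0 < s" "s < 1" "a < p + s * t" "p + s * t < b" "0 \<le> p + s * t"
    using eventually_happens'[OF trivial_limit_at_right_real] by blast
  have "K * (p + s * t) * (A - (p + s * t)) = K * p * (A - p) + K * s * t\<^sup>2 * (1 - s)"
    by (simp add: t_def algebra_simps power2_eq_square)
  moreover have "0 < K * s * t\<^sup>2 * (1 - s)"
    using assms s \<open>t \<noteq> 0\<close> by simp
  ultimately show False
    using max[OF s(5,3,4)] by simp
qed

locale cdn_duopoly =
  fixes Lam b1 b2 :: real
  assumes Lam_pos: "0 < Lam" and b1_less_b2: "b1 < b2" and b2_less_1: "b2 < 1"
begin

lemma market_split:
  assumes "0 < Lam1 Lam b1 b2 w1 w2" "0 < Lam2 Lam b1 b2 w1 w2"
  shows "w1 - w2 < b2 - b1" "w2 * (1 - b1) < w1 * (1 - b2)"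
proof -
  obtain x where x: "x \<in> choosers b1 w1 b2 w2"
    using assms(1) by (force simp: Lam1_def demand_def)
  obtain y where y: "y \<in> choosers b2 w2 b1 w1"
    using assms(2) by (force simp: Lam2_def demand_def)
  have "w1 - w2 < x * (b2 - b1)" "x \<le> 1"
    using x by (auto simp: choosers_def cp_payoff_def algebra_simps)
  moreover have "x * (b2 - b1) \<le> 1 * (b2 - b1)"
    using \<open>x \<le> 1\<close> b1_less_b2 by (intro mult_right_mono) auto
  ultimately show "w1 - w2 < b2 - b1"
    by simp
  have "w2 < y * (1 - b2)" "y * (b2 - b1) < w1 - w2"
    using y by (auto simp: choosers_def cp_payoff_def algebra_simps)
  have "w2 * (b2 - b1) < y * (1 - b2) * (b2 - b1)"
    using \<open>w2 < y * (1 - b2)\<close> b1_less_b2 by simp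
  also have "\<dots> = y * (b2 - b1) * (1 - b2)"
    by simp
  also have "\<dots> < (w1 - w2) * (1 - b2)"
    using \<open>y * (b2 - b1) < w1 - w2\<close> b2_less_1 by simp
  finally have "w2 * (b2 - b1) < (w1 - w2) * (1 - b2)" .
  then show "w2 * (1 - b1) < w1 * (1 - b2)"
    by (simp add: algebra_simps)
qed

lemma J1_eq_quadratic:
  assumes "w2 \<le> w" "w \<le> w2 + (b2 - b1)" "w2 * (1 - b1) \<le> w * (1 - b2)"
  shows "J1 Lam b1 b2 w w2 = Lam / (b2 - b1) * w * (b2 - b1 + w2 - w)"
proof -
  have "measure lborel (choosers b1 w b2 w2) = 1 - (w - w2) / (b2 - b1)"
    using assms b1_less_b2 b2_less_1 by (intro measure_choosers_lower_beta) auto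
  also have "\<dots> = (b2 - b1 + w2 - w) / (b2 - b1)"
    using b1_less_b2 by (simp add: field_simps)
  finally show ?thesis
    by (simp add: J1_def Lam1_def demand_def)
qed

lemma J2_eq_quadratic:
  assumes "0 \<le> w" "w * (1 - b1) \<le> w1 * (1 - b2)" "w1 - w \<le> b2 - b1"
  shows "J2 Lam b1 b2 w1 w
    = Lam * (1 - b1) / ((b2 - b1) * (1 - b2)) * w * (w1 * (1 - b2) / (1 - b1) - w)"
proof -
  have "measure lborel (choosers b2 w b1 w1) = (w1 - w) / (b2 - b1) - w / (1 - b2)"
    using assms b1_less_b2 b2_less_1 by (intro measure_choosers_higher_beta) auto
  also have "\<dots> = (1 - b1) / ((b2 - b1) * (1 - b2)) * (w1 * (1 - b2) / (1 - b1) - w)"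
    using b1_less_b2 b2_less_1 by (simp add: divide_simps) (simp add: algebra_simps)
  finally show ?thesis
    by (simp add: J2_def Lam2_def demand_def)
qed

lemma nash_price1_vertex:
  assumes "nash_eq Lam b1 b2 w1 w2" "w1 - w2 < b2 - b1" "w2 * (1 - b1) < w1 * (1 - b2)"
  shows "b2 - b1 + w2 = 2 * w1"
proof (rule parabola_local_max_vertex)
  have "0 \<le> w2" "0 \<le> w1" and best: "\<And>w. 0 \<le> w \<Longrightarrow> J1 Lam b1 b2 w w2 \<le> J1 Lam b1 b2 w1 w2"
    using assms(1) by (auto simp: nash_eq_def)
  show "0 < Lam / (b2 - b1)" "0 < b2 - b1 + w2" "0 \<le> w1"
    using Lam_pos b1_less_b2 \<open>0 \<le> w2\<close> \<open>0 \<le> w1\<close> by auto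
  show "w2 * (1 - b1) / (1 - b2) < w1" "w1 < w2 + (b2 - b1)"
    using assms(2,3) b2_less_1 by (auto simp: pos_divide_less_eq)
  have above_w2: "w2 \<le> w" if "w2 * (1 - b1) < w * (1 - b2)" for w
  proof -
    have "w2 * (1 - b2) \<le> w2 * (1 - b1)"
      using \<open>0 \<le> w2\<close> b1_less_b2 by (intro mult_left_mono) auto
    then have "w2 * (1 - b2) < w * (1 - b2)"
      using that by linarith
    then show ?thesis
      using b2_less_1 by simp
  qed
  show "Lam / (b2 - b1) * w * (b2 - b1 + w2 - w) \<le> Lam / (b2 - b1) * w1 * (b2 - b1 + w2 - w1)"
    if "0 \<le> w" "w2 * (1 - b1) / (1 - b2) < w" "w < w2 + (b2 - b1)" for w
  proof -
    have "w2 * (1 - b1) < w * (1 - b2)"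
      using that(2) b2_less_1 by (simp add: pos_divide_less_eq)
    then show ?thesis
      using best[OF that(1)] J1_eq_quadratic[of w2 w] J1_eq_quadratic[of w2 w1] assms(2,3) that
        above_w2[of w] above_w2[of w1]
      by simp
  qed
qed

lemma nash_price2_vertex:
  assumes "nash_eq Lam b1 b2 w1 w2" "w1 - w2 < b2 - b1" "w2 * (1 - b1) < w1 * (1 - b2)"
  shows "w1 * (1 - b2) = 2 * w2 * (1 - b1)"
proof -
  define K where "K = Lam * (1 - b1) / ((b2 - b1) * (1 - b2))"
  define A where "A = w1 * (1 - b2) / (1 - b1)"
  have "0 \<le> w2" and best: "\<And>w. 0 \<le> w \<Longrightarrow> J2 Lam b1 b2 w1 w \<le> J2 Lam b1 b2 w1 w2"
    using assms(1) by (auto simp: nash_eq_def)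
  have "A = 2 * w2"
  proof (rule parabola_local_max_vertex)
    show "0 < K"
      using Lam_pos b1_less_b2 b2_less_1 by (simp add: K_def)
    show "w2 < A"
      using assms(3) b1_less_b2 b2_less_1 by (simp add: A_def pos_less_divide_eq)
    with \<open>0 \<le> w2\<close> show "0 < A" "0 \<le> w2"
      by auto
    show "w1 - (b2 - b1) < w2"
      using assms(2) by simp
    show "K * w * (A - w) \<le> K * w2 * (A - w2)" if "0 \<le> w" "w1 - (b2 - b1) < w" "w < A" for w
    proof -
      have "w * (1 - b1) < w1 * (1 - b2)"
        using that(3) b1_less_b2 b2_less_1 by (simp add: A_def pos_less_divide_eq)
      then show ?thesis
        using best[OF that(1)] J2_eq_quadratic[of w w1] J2_eq_quadratic[of w2 w1] assms(2,3) that \<open>0 \<le> w2\<close>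
        by (simp add: K_def A_def)
    qed
  qed
  then show ?thesis
    using b1_less_b2 b2_less_1 by (simp add: A_def divide_simps)
qed

lemma revenues_at_vertices:
  assumes "0 < w2" "b2 - b1 + w2 = 2 * w1" "w1 * (1 - b2) = 2 * w2 * (1 - b1)"
  shows "J1 Lam b1 b2 w1 w2 = (1 - b1) / (1 - b2) * (4 * J2 Lam b1 b2 w1 w2)"
    and "0 < J2 Lam b1 b2 w1 w2"
proof -
  define K where "K = Lam * (1 - b1) / ((b2 - b1) * (1 - b2))"
  have "w2 * (1 - b2) \<le> w2 * (1 - b1)"
    using assms(1) b1_less_b2 by (intro mult_left_mono) auto
  then have "(2 * w2) * (1 - b2) \<le> w1 * (1 - b2)"
    using assms(3) by linarith
  then have "2 * w2 \<le> w1"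
    using b2_less_1 by simp
  then have J1: "J1 Lam b1 b2 w1 w2 = Lam / (b2 - b1) * w1 * w1"
    using J1_eq_quadratic[of w2 w1] assms b1_less_b2 b2_less_1 by simp
  have J2: "J2 Lam b1 b2 w1 w2 = K * w2 * w2"
    using J2_eq_quadratic[of w2 w1] assms \<open>2 * w2 \<le> w1\<close> b1_less_b2 b2_less_1
    by (simp add: K_def)
  show "0 < J2 Lam b1 b2 w1 w2"
    using Lam_pos b1_less_b2 b2_less_1 assms(1) by (simp add: J2 K_def)
  have "Lam / (b2 - b1) * w1 * w1 = Lam / ((b2 - b1) * (1 - b2)\<^sup>2) * (w1 * (1 - b2))\<^sup>2"
    using b1_less_b2 b2_less_1 by (simp add: power_mult_distrib power2_eq_square)
  also have "\<dots> = Lam / ((b2 - b1) * (1 - b2)\<^sup>2) * (2 * w2 * (1 - b1))\<^sup>2"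
    using assms(3) by simp
  also have "\<dots> = (1 - b1) / (1 - b2) * (4 * (K * w2 * w2))"
    by (simp add: K_def field_simps power2_eq_square)
  finally show "J1 Lam b1 b2 w1 w2 = (1 - b1) / (1 - b2) * (4 * J2 Lam b1 b2 w1 w2)"
    by (simp add: J1 J2)
qed

end

theorem theorem1:
  fixes Lam b1 b2 w1 w2 :: real
  assumes "Lam > 0"
    and "0 \<le> b1" and "b1 < b2" and "b2 < 1"
    and "nash_eq Lam b1 b2 w1 w2"
    and "Lam1 Lam b1 b2 w1 w2 > 0" and "Lam2 Lam b1 b2 w1 w2 > 0"
  shows "J1 Lam b1 b2 w1 w2 > 4 * J2 Lam b1 b2 w1 w2"
proof -
  interpret cdn_duopoly Lam b1 b2
    using assms(1,3,4) by unfold_locales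
  have split: "w1 - w2 < b2 - b1" "w2 * (1 - b1) < w1 * (1 - b2)"
    using market_split assms(6,7) by auto
  have vertex1: "b2 - b1 + w2 = 2 * w1" and vertex2: "w1 * (1 - b2) = 2 * w2 * (1 - b1)"
    using nash_price1_vertex nash_price2_vertex assms(5) split by auto
  have "0 < w2"
    using split(2) vertex2 assms(3,4) by (simp add: zero_less_mult_iff)
  note revenues = revenues_at_vertices[OF \<open>0 < w2\<close> vertex1 vertex2]
  have "1 < (1 - b1) / (1 - b2)"
    using assms(3,4) by simp
  then have "1 * (4 * J2 Lam b1 b2 w1 w2) < (1 - b1) / (1 - b2) * (4 * J2 Lam b1 b2 w1 w2)"
    using revenues(2) by (intro mult_strict_right_mono) auto
  then show ?thesis
    using revenues(1) by linarith
qed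

end
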